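(* For every $i\in\mathcal U$ and every $a\in L$: $\exists u\,T(i,a,u)$ holds if and only if the sequent $B\to\exists u\,T(i,a,u)$ is provable.
   Context: The theory $\mathbf B$: first-order theory with binary infix function symbol "$.$", predicates $T(i,a,u)$, $U(x,s,z,q,j,i,u)$, and single axiom $B$, the conjunction of the universal closures of: (1) $T(i,a,u)\supset U(\emptyset,\emptyset,a.\emptyset,1,i,i,u)$; (2) $U(\emptyset,\emptyset,a.\emptyset,1,i,i,u)\supset T(i,a,u)$; (3) $U(x,s,z,0,i,i,x)$; (4) $U(x,v,r.z,p,i,i,u)\supset U(x.v,s,z,q,\,q.s.p.r.0.j,\,i,u)$; (5) $U(x.r,v,z,p,i,i,u)\supset U(x,s,v.z,q,\,q.s.p.r.1.j,\,i,u)$; (6) $U(x,s,z,q,j,i,u)\supset U(x,s,z,q,\,q'.s'.p.r.d.j,\,i,u)$. $L$ is the set of right-tape lists (built from $\emptyset$ by $s.z$ with $s$ a tape symbol), $M\subset L$ the set of Turing machine codes (lists of quintuples $q.s.p.r.d$ with states $p,q$, symbols $r,s$, move $d\in\{0,1\}$); in the intended interpretation $T(i,a,u)$ means machine $i$ on input $a$ halts with output $u$. $\mathcal U$ is the set of deterministic Turing machine codes (no two quintuples with the same $q.s$ and different $p.r.d$) that on every input $F.\emptyset$, $F$ a propositional formula, halt with output $\emptyset.0$ if $F$ is satisfiable and $\emptyset.1$ if $F$ is unsatisfiable. *)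

theory Defs
  imports Main
begin

section \<open>First-order syntax of the theory B (with equality), de Bruijn variables\<close>

text \<open>Function symbols: constants empty, 0, 1 and the binary infix dot.
  Predicate symbols: T (ternary) and U (7-ary).\<close>

datatype sym = SEmp | SZero | SOne | SDot
datatype prd = PT | PU

datatype tm = Var nat | App sym "tm list"

datatype fm = FF | Pred prd "tm list" | Eq tm tm | Imp fm fm | And fm fm | Or fm fm
  | All fm | Ex fm

primrec liftt :: "nat \<Rightarrow> tm \<Rightarrow> tm" where
  "liftt k (Var i) = (if i < k then Var i else Var (Suc i))"
| "liftt k (App f ts) = App f (map (liftt k) ts)"

primrec substt :: "tm \<Rightarrow> tm \<Rightarrow> nat \<Rightarrow> tm" where
  "substt (Var i) s k = (if k < i then Var (i - 1) else if i = k then s else Var i)"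
| "substt (App f ts) s k = App f (map (\<lambda>t. substt t s k) ts)"

primrec liftf :: "nat \<Rightarrow> fm \<Rightarrow> fm" where
  "liftf k FF = FF"
| "liftf k (Pred p ts) = Pred p (map (liftt k) ts)"
| "liftf k (Eq t u) = Eq (liftt k t) (liftt k u)"
| "liftf k (Imp p q) = Imp (liftf k p) (liftf k q)"
| "liftf k (And p q) = And (liftf k p) (liftf k q)"
| "liftf k (Or p q) = Or (liftf k p) (liftf k q)"
| "liftf k (All p) = All (liftf (Suc k) p)"
| "liftf k (Ex p) = Ex (liftf (Suc k) p)"

text \<open>substf p s k: substitute s for variable k, decrementing the variables above k.\<close>
primrec substf :: "fm \<Rightarrow> tm \<Rightarrow> nat \<Rightarrow> fm" where
  "substf FF s k = FF"
| "substf (Pred p ts) s k = Pred p (map (\<lambda>t. substt t s k) ts)"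
| "substf (Eq t u) s k = Eq (substt t s k) (substt u s k)"
| "substf (Imp p q) s k = Imp (substf p s k) (substf q s k)"
| "substf (And p q) s k = And (substf p s k) (substf q s k)"
| "substf (Or p q) s k = Or (substf p s k) (substf q s k)"
| "substf (All p) s k = All (substf p (liftt 0 s) (Suc k))"
| "substf (Ex p) s k = Ex (substf p (liftt 0 s) (Suc k))"

text \<open>Classical natural deduction for first-order logic with equality.
  \<open>G \<turnstile> p\<close>: the sequent G \<rightarrow> p is provable.\<close>

inductive deriv :: "fm list \<Rightarrow> fm \<Rightarrow> bool" (infix "\<turnstile>" 30) where
  Assum: "p \<in> set G \<Longrightarrow> G \<turnstile> p"
| FFE: "G \<turnstile> FF \<Longrightarrow> G \<turnstile> p"
| Class: "Imp p FF # G \<turnstile> FF \<Longrightarrow> G \<turnstile> p"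
| ImpI: "p # G \<turnstile> q \<Longrightarrow> G \<turnstile> Imp p q"
| ImpE: "G \<turnstile> Imp p q \<Longrightarrow> G \<turnstile> p \<Longrightarrow> G \<turnstile> q"
| AndI: "G \<turnstile> p \<Longrightarrow> G \<turnstile> q \<Longrightarrow> G \<turnstile> And p q"
| AndE1: "G \<turnstile> And p q \<Longrightarrow> G \<turnstile> p"
| AndE2: "G \<turnstile> And p q \<Longrightarrow> G \<turnstile> q"
| OrI1: "G \<turnstile> p \<Longrightarrow> G \<turnstile> Or p q"
| OrI2: "G \<turnstile> q \<Longrightarrow> G \<turnstile> Or p q"
| OrE: "G \<turnstile> Or p q \<Longrightarrow> p # G \<turnstile> r \<Longrightarrow> q # G \<turnstile> r \<Longrightarrow> G \<turnstile> r"
| AllI: "map (liftf 0) G \<turnstile> p \<Longrightarrow> G \<turnstile> All p"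
| AllE: "G \<turnstile> All p \<Longrightarrow> G \<turnstile> substf p t 0"
| ExI: "G \<turnstile> substf p t 0 \<Longrightarrow> G \<turnstile> Ex p"
| ExE: "G \<turnstile> Ex p \<Longrightarrow> p # map (liftf 0) G \<turnstile> liftf 0 q \<Longrightarrow> G \<turnstile> q"
| EqR: "G \<turnstile> Eq t t"
| EqS: "G \<turnstile> Eq s t \<Longrightarrow> G \<turnstile> substf p s 0 \<Longrightarrow> G \<turnstile> substf p t 0"

abbreviation tE :: tm where "tE \<equiv> App SEmp []"
abbreviation t0 :: tm where "t0 \<equiv> App SZero []"
abbreviation t1 :: tm where "t1 \<equiv> App SOne []"
definition dot :: "tm \<Rightarrow> tm \<Rightarrow> tm" (infixr "\<cdot>" 70) where "a \<cdot> b = App SDot [a, b]"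

definition fT :: "tm \<Rightarrow> tm \<Rightarrow> tm \<Rightarrow> fm" where "fT i a u = Pred PT [i, a, u]"
definition fU :: "tm \<Rightarrow> tm \<Rightarrow> tm \<Rightarrow> tm \<Rightarrow> tm \<Rightarrow> tm \<Rightarrow> tm \<Rightarrow> fm" where
  "fU x s z q j i u = Pred PU [x, s, z, q, j, i, u]"

fun allc :: "nat \<Rightarrow> fm \<Rightarrow> fm" where
  "allc 0 p = p"
| "allc (Suc n) p = All (allc n p)"

definition ax1 :: fm where  \<comment> \<open>i = 0, a = 1, u = 2\<close>
  "ax1 = allc 3 (Imp (fT (Var 0) (Var 1) (Var 2))
                      (fU tE tE (Var 1 \<cdot> tE) t1 (Var 0) (Var 0) (Var 2)))"
definition ax2 :: fm where
  "ax2 = allc 3 (Imp (fU tE tE (Var 1 \<cdot> tE) t1 (Var 0) (Var 0) (Var 2))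
                      (fT (Var 0) (Var 1) (Var 2)))"
definition ax3 :: fm where  \<comment> \<open>x = 0, s = 1, z = 2, i = 3\<close>
  "ax3 = allc 4 (fU (Var 0) (Var 1) (Var 2) t0 (Var 3) (Var 3) (Var 0))"
definition ax4 :: fm where
  \<comment> \<open>x = 0, v = 1, r = 2, z = 3, p = 4, i = 5, u = 6, s = 7, q = 8, j = 9\<close>
  "ax4 = allc 10 (Imp (fU (Var 0) (Var 1) (Var 2 \<cdot> Var 3) (Var 4) (Var 5) (Var 5) (Var 6))
     (fU (Var 0 \<cdot> Var 1) (Var 7) (Var 3) (Var 8)
         (Var 8 \<cdot> Var 7 \<cdot> Var 4 \<cdot> Var 2 \<cdot> t0 \<cdot> Var 9) (Var 5) (Var 6)))"
definition ax5 :: fm where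
  \<comment> \<open>x = 0, r = 1, v = 2, z = 3, p = 4, i = 5, u = 6, s = 7, q = 8, j = 9\<close>
  "ax5 = allc 10 (Imp (fU (Var 0 \<cdot> Var 1) (Var 2) (Var 3) (Var 4) (Var 5) (Var 5) (Var 6))
     (fU (Var 0) (Var 7) (Var 2 \<cdot> Var 3) (Var 8)
         (Var 8 \<cdot> Var 7 \<cdot> Var 4 \<cdot> Var 1 \<cdot> t1 \<cdot> Var 9) (Var 5) (Var 6)))"
definition ax6 :: fm where
  \<comment> \<open>x = 0, s = 1, z = 2, q = 3, j = 4, i = 5, u = 6, q' = 7, s' = 8, p = 9, r = 10, d = 11\<close>
  "ax6 = allc 12 (Imp (fU (Var 0) (Var 1) (Var 2) (Var 3) (Var 4) (Var 5) (Var 6))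
     (fU (Var 0) (Var 1) (Var 2) (Var 3)
         (Var 7 \<cdot> Var 8 \<cdot> Var 9 \<cdot> Var 10 \<cdot> Var 11 \<cdot> Var 4) (Var 5) (Var 6)))"

definition axB :: fm where
  "axB = And ax1 (And ax2 (And ax3 (And ax4 (And ax5 ax6))))"

section \<open>Intended interpretation: closed terms and Turing machines\<close>

datatype gt = GE | GZ | GO | GDot gt gt

primrec tm_of :: "gt \<Rightarrow> tm" where
  "tm_of GE = tE" | "tm_of GZ = t0" | "tm_of GO = t1"
| "tm_of (GDot a b) = tm_of a \<cdot> tm_of b"

text \<open>Right-tape lists L and machine codes M (lists of quintuples q.s.p.r.d, d in {0,1}).\<close>
inductive_set L :: "gt set" where
  "GE \<in> L" | "z \<in> L \<Longrightarrow> GDot s z \<in> L"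

inductive_set M :: "gt set" where
  "GE \<in> M"
| "j \<in> M \<Longrightarrow> d \<in> {GZ, GO} \<Longrightarrow> GDot q (GDot s (GDot p (GDot r (GDot d j)))) \<in> M"

fun quints :: "gt \<Rightarrow> (gt \<times> gt \<times> gt \<times> gt \<times> gt) list" where
  "quints (GDot q (GDot s (GDot p (GDot r (GDot d j))))) = (q, s, p, r, d) # quints j"
| "quints _ = []"

text \<open>Configurations (left tape x, scanned symbol s, right tape z, state q).\<close>
inductive step :: "gt \<Rightarrow> gt \<times> gt \<times> gt \<times> gt \<Rightarrow> gt \<times> gt \<times> gt \<times> gt \<Rightarrow> bool" for i where
  left: "(q, s, p, r, GZ) \<in> set (quints i) \<Longrightarrow> step i (GDot x v, s, z, q) (x, v, GDot r z, p)"
| right: "(q, s, p, r, GO) \<in> set (quints i) \<Longrightarrow> step i (x, s, GDot v z, q) (GDot x r, v, z, p)"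

text \<open>Machine i on input a halts (reaches state 0) with output u (the left tape).\<close>
definition halts :: "gt \<Rightarrow> gt \<Rightarrow> gt \<Rightarrow> bool" where
  "halts i a u \<longleftrightarrow> (\<exists>s z. (step i)\<^sup>*\<^sup>* (GE, GE, GDot a GE, GO) (u, s, z, GZ))"

definition deterministic :: "gt \<Rightarrow> bool" where
  "deterministic i \<longleftrightarrow> (\<forall>q s p r d p' r' d'. (q, s, p, r, d) \<in> set (quints i) \<longrightarrow>
      (q, s, p', r', d') \<in> set (quints i) \<longrightarrow> (p, r, d) = (p', r', d'))"

datatype pform = PVar nat | PNeg pform | PConj pform pform | PDisj pform pform

primrec peval :: "(nat \<Rightarrow> bool) \<Rightarrow> pform \<Rightarrow> bool" where
  "peval v (PVar n) = v n" | "peval v (PNeg F) = (\<not> peval v F)"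
| "peval v (PConj F G) = (peval v F \<and> peval v G)"
| "peval v (PDisj F G) = (peval v F \<or> peval v G)"

definition psat :: "pform \<Rightarrow> bool" where "psat F \<longleftrightarrow> (\<exists>v. peval v F)"

definition UU :: "(pform \<Rightarrow> gt) \<Rightarrow> gt set" where
  "UU enc = {i \<in> M. deterministic i \<and>
     (\<forall>F. (psat F \<longrightarrow> halts i (GDot (enc F) GE) (GDot GE GZ)) \<and>
          (\<not> psat F \<longrightarrow> halts i (GDot (enc F) GE) (GDot GE GO)))}"

end

theory Submission
  imports Defs
begin

(* This holds for every pair of closed terms i, a.

   Soundness ("\<Leftarrow>").  Interpret the language over closed terms, reading U as the least
   relation Ustd closed under axioms (3)-(6) and T(i,a,u) as U(\<emptyset>,\<emptyset>,a.\<emptyset>,1,i,i,u).  Every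
   derivable sequent is true (soundness of natural deduction) and B is true, so a proof of
   \<exists>u T(i,a,u) yields a u with Ustd(\<emptyset>,\<emptyset>,a.\<emptyset>,1,i,i,u).  Induction on Ustd, keeping track of
   the fact that the program argument j is always a quintuple-suffix of i, turns this into
   a halting run of i.

   Completeness ("\<Rightarrow>").  Instantiating the universal closures of B with closed terms gives
   one derived rule per axiom; by induction along a halting run these derive U for every
   configuration of the run, read backwards from the final state 0, and axiom (2) then
   derives T(i,a,u). *)

declare dot_def[simp]

section \<open>The standard model\<close>

text \<open>The standard interpretation of U: the least relation closed under axioms (3)-(6).\<close>
inductive Ustd :: "gt \<Rightarrow> gt \<Rightarrow> gt \<Rightarrow> gt \<Rightarrow> gt \<Rightarrow> gt \<Rightarrow> gt \<Rightarrow> bool" where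
  halt: "Ustd x s z GZ i i x"
| left: "Ustd x v (GDot r z) p i i u \<Longrightarrow>
    Ustd (GDot x v) s z q (GDot q (GDot s (GDot p (GDot r (GDot GZ j))))) i u"
| right: "Ustd (GDot x r) v z p i i u \<Longrightarrow>
    Ustd x s (GDot v z) q (GDot q (GDot s (GDot p (GDot r (GDot GO j))))) i u"
| skip: "Ustd x s z q j i u \<Longrightarrow> Ustd x s z q (GDot q' (GDot s' (GDot p (GDot r (GDot d j))))) i u"

fun eval_sym :: "sym \<Rightarrow> gt list \<Rightarrow> gt" where
  "eval_sym SEmp _ = GE" | "eval_sym SZero _ = GZ" | "eval_sym SOne _ = GO"
| "eval_sym SDot [a, b] = GDot a b" | "eval_sym SDot _ = GE"

fun eval_prd :: "prd \<Rightarrow> gt list \<Rightarrow> bool" where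
  "eval_prd PT [i, a, u] = Ustd GE GE (GDot a GE) GO i i u"
| "eval_prd PU [x, s, z, q, j, i, u] = Ustd x s z q j i u"
| "eval_prd _ _ = False"

primrec eval_tm :: "(nat \<Rightarrow> gt) \<Rightarrow> tm \<Rightarrow> gt" where
  "eval_tm e (Var n) = e n"
| "eval_tm e (App f ts) = eval_sym f (map (eval_tm e) ts)"

definition shift :: "(nat \<Rightarrow> gt) \<Rightarrow> nat \<Rightarrow> gt \<Rightarrow> nat \<Rightarrow> gt" where
  "shift e k x = (\<lambda>n. if n < k then e n else if n = k then x else e (n - 1))"

primrec holds :: "(nat \<Rightarrow> gt) \<Rightarrow> fm \<Rightarrow> bool" where
  "holds e FF = False"
| "holds e (Pred p ts) = eval_prd p (map (eval_tm e) ts)"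
| "holds e (Eq t u) = (eval_tm e t = eval_tm e u)"
| "holds e (Imp p q) = (holds e p \<longrightarrow> holds e q)"
| "holds e (And p q) = (holds e p \<and> holds e q)"
| "holds e (Or p q) = (holds e p \<or> holds e q)"
| "holds e (All p) = (\<forall>x. holds (shift e 0 x) p)"
| "holds e (Ex p) = (\<exists>x. holds (shift e 0 x) p)"

lemma eval_liftt: "eval_tm (shift e k x) (liftt k t) = eval_tm e t"
  by (induction t) (auto simp: shift_def comp_def intro!: arg_cong[where f="eval_sym _"])

lemma eval_substt: "eval_tm e (substt t s k) = eval_tm (shift e k (eval_tm e s)) t"
  by (induction t) (auto simp: shift_def comp_def intro!: arg_cong[where f="eval_sym _"])

lemma shift_shift: "shift (shift e k x) 0 y = shift (shift e 0 y) (Suc k) x"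
  by (rule ext) (auto simp: shift_def)

lemma holds_liftf: "holds (shift e k x) (liftf k p) = holds e p"
  by (induction p arbitrary: e k) (auto simp: eval_liftt comp_def shift_shift)

lemma holds_substf: "holds e (substf p s k) = holds (shift e k (eval_tm e s)) p"
  by (induction p arbitrary: e k s) (auto simp: eval_substt comp_def shift_shift eval_liftt)

lemma soundness: "G \<turnstile> p \<Longrightarrow> \<forall>g\<in>set G. holds e g \<Longrightarrow> holds e p"
proof (induction arbitrary: e rule: deriv.induct)
  case (AllI G p)
  then show ?case by (auto simp: holds_liftf)
next
  case (ExE G p q)
  from ExE.IH(1)[OF ExE.prems] obtain x where x: "holds (shift e 0 x) p"
    by auto
  with ExE.IH(2)[of "shift e 0 x"] ExE.prems have "holds (shift e 0 x) (liftf 0 q)"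
    by (simp add: holds_liftf)
  then show ?case by (simp add: holds_liftf)
qed (auto simp: holds_substf)

lemma holds_allc: "(\<And>e'. holds e' p) \<Longrightarrow> holds e (allc n p)"
  by (induction n arbitrary: e) auto

text \<open>B is true in the standard model: its clauses are exactly the rules of Ustd.\<close>
lemma holds_axB: "holds e axB"
  unfolding axB_def ax1_def ax2_def ax3_def ax4_def ax5_def ax6_def
  by (auto simp: fT_def fU_def intro!: holds_allc intro: Ustd.intros)

lemma eval_tm_of [simp]: "eval_tm e (tm_of g) = g"
  by (induction g) auto

inductive code_suffix :: "gt \<Rightarrow> gt \<Rightarrow> bool" where
  refl: "code_suffix j j"
| cons: "code_suffix j k \<Longrightarrow> code_suffix j (GDot q (GDot s (GDot p (GDot r (GDot d k)))))"

lemma code_suffix_tail: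
  "code_suffix (GDot q (GDot s (GDot p (GDot r (GDot d j))))) i \<Longrightarrow> code_suffix j i"
  by (induction "GDot q (GDot s (GDot p (GDot r (GDot d j))))" i rule: code_suffix.induct)
    (auto intro: code_suffix.intros)

lemma code_suffix_quints: "code_suffix j i \<Longrightarrow> set (quints j) \<subseteq> set (quints i)"
  by (induction rule: code_suffix.induct) auto

lemma quints_code_suffix: "(q, s, p, r, d) \<in> set (quints i) \<Longrightarrow>
   \<exists>j. code_suffix (GDot q (GDot s (GDot p (GDot r (GDot d j))))) i"
  by (induction i rule: quints.induct) (auto intro: code_suffix.intros)

lemma Ustd_run: "Ustd x s z q j i u \<Longrightarrow> code_suffix j i \<Longrightarrow>
   \<exists>s' z'. (step i)\<^sup>*\<^sup>* (x, s, z, q) (u, s', z', GZ)"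
proof (induction rule: Ustd.induct)
  case (halt x s z i)
  then show ?case by auto
next
  case (left x v r z p i u s q j)
  then have "(q, s, p, r, GZ) \<in> set (quints i)"
    using code_suffix_quints by fastforce
  then have "step i (GDot x v, s, z, q) (x, v, GDot r z, p)" by (rule step.left)
  moreover obtain s' z' where "(step i)\<^sup>*\<^sup>* (x, v, GDot r z, p) (u, s', z', GZ)"
    using left code_suffix.refl by blast
  ultimately show ?case by (meson converse_rtranclp_into_rtranclp)
next
  case (right x r v z p i u s q j)
  then have "(q, s, p, r, GO) \<in> set (quints i)"
    using code_suffix_quints by fastforce
  then have "step i (x, s, GDot v z, q) (GDot x r, v, z, p)" by (rule step.right)
  moreover obtain s' z' where "(step i)\<^sup>*\<^sup>* (GDot x r, v, z, p) (u, s', z', GZ)"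
    using right code_suffix.refl by blast
  ultimately show ?case by (meson converse_rtranclp_into_rtranclp)
next
  case (skip x s z q j i u q' s' p r d)
  then show ?case using code_suffix_tail by blast
qed

lemma provable_halts:
  assumes "[axB] \<turnstile> Ex (fT (tm_of i) (tm_of a) (Var 0))"
  shows "\<exists>u. halts i a u"
proof -
  have "holds (\<lambda>_. GE) (Ex (fT (tm_of i) (tm_of a) (Var 0)))"
    using soundness[OF assms] holds_axB by simp
  then obtain u where "Ustd GE GE (GDot a GE) GO i i u"
    by (auto simp: fT_def shift_def)
  then show ?thesis
    unfolding halts_def using Ustd_run code_suffix.refl by blast
qed

section \<open>Derivations from B along a run\<close>

text \<open>Simultaneous instantiation of the outermost variables, the last term for Var 0.\<close>
fun substs :: "fm \<Rightarrow> tm list \<Rightarrow> fm" where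
  "substs p [] = p"
| "substs p (t # ts) = substs (substf p t (length ts)) ts"

lemma substs_Imp: "substs (Imp p q) ts = Imp (substs p ts) (substs q ts)"
  by (induction ts arbitrary: p q) auto

lemma liftt_tm_of [simp]: "liftt k (tm_of g) = tm_of g"
  by (induction g) auto

lemma substt_tm_of [simp]: "substt (tm_of g) s k = tm_of g"
  by (induction g) auto

lemma substf_allc: "substf (allc n p) (tm_of g) k = allc n (substf p (tm_of g) (k + n))"
  by (induction n arbitrary: k) auto

lemma allc_inst: "G \<turnstile> allc n p \<Longrightarrow> length gs = n \<Longrightarrow> G \<turnstile> substs p (map tm_of gs)"
proof (induction gs arbitrary: p n)
  case Nil
  then show ?case by simp
next
  case (Cons g gs)
  then have "G \<turnstile> substf (allc (length gs) p) (tm_of g) 0"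
    by (auto intro: AllE)
  then have "G \<turnstile> allc (length gs) (substf p (tm_of g) (length gs))"
    by (simp add: substf_allc)
  then show ?case using Cons.IH by simp
qed

lemma allc_inst_mp:
  assumes "G \<turnstile> allc n (Imp p q)" and "length gs = n" and "G \<turnstile> substs p (map tm_of gs)"
  shows "G \<turnstile> substs q (map tm_of gs)"
  using allc_inst[of G n "Imp p q" gs] assms by (auto simp: substs_Imp intro: ImpE)

lemma axB_conjuncts: "[axB] \<turnstile> ax1" "[axB] \<turnstile> ax2" "[axB] \<turnstile> ax3" "[axB] \<turnstile> ax4"
  "[axB] \<turnstile> ax5" "[axB] \<turnstile> ax6"
proof -
  have "[axB] \<turnstile> axB" by (rule Assum) simp
  then show "[axB] \<turnstile> ax1" "[axB] \<turnstile> ax2" "[axB] \<turnstile> ax3" "[axB] \<turnstile> ax4"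
    "[axB] \<turnstile> ax5" "[axB] \<turnstile> ax6"
    unfolding axB_def by (meson AndE1 AndE2)+
qed

fun fU_cfg :: "gt \<times> gt \<times> gt \<times> gt \<Rightarrow> gt \<Rightarrow> gt \<Rightarrow> gt \<Rightarrow> fm" where
  "fU_cfg (x, s, z, q) j i u = fU (tm_of x) (tm_of s) (tm_of z) (tm_of q) (tm_of j) (tm_of i) (tm_of u)"

text \<open>The closed instances of axioms (2)-(6) as derived rules.
  The instantiating list names the variables from the highest index down to Var 0.\<close>
lemma derive_T: "[axB] \<turnstile> fU_cfg (GE, GE, GDot a GE, GO) i i u \<Longrightarrow>
  [axB] \<turnstile> fT (tm_of i) (tm_of a) (tm_of u)"
  using allc_inst_mp[OF axB_conjuncts(2)[unfolded ax2_def], of "[u, a, i]"]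
  by (simp add: fT_def fU_def)

lemma derive_halt: "[axB] \<turnstile> fU_cfg (x, s, z, GZ) i i x"
  using allc_inst[OF axB_conjuncts(3)[unfolded ax3_def], of "[i, z, s, x]"]
  by (simp add: fU_def)

lemma derive_left: "[axB] \<turnstile> fU_cfg (x, v, GDot r z, p) i i u \<Longrightarrow>
  [axB] \<turnstile> fU_cfg (GDot x v, s, z, q) (GDot q (GDot s (GDot p (GDot r (GDot GZ j))))) i u"
  using allc_inst_mp[OF axB_conjuncts(4)[unfolded ax4_def], of "[j, q, s, u, i, p, z, r, v, x]"]
  by (simp add: fU_def)

lemma derive_right: "[axB] \<turnstile> fU_cfg (GDot x r, v, z, p) i i u \<Longrightarrow>
  [axB] \<turnstile> fU_cfg (x, s, GDot v z, q) (GDot q (GDot s (GDot p (GDot r (GDot GO j))))) i u"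
  using allc_inst_mp[OF axB_conjuncts(5)[unfolded ax5_def], of "[j, q, s, u, i, p, z, v, r, x]"]
  by (simp add: fU_def)

lemma derive_skip: "[axB] \<turnstile> fU_cfg (x, s, z, q) j i u \<Longrightarrow>
  [axB] \<turnstile> fU_cfg (x, s, z, q) (GDot q' (GDot s' (GDot p (GDot r (GDot d j))))) i u"
  using allc_inst_mp[OF axB_conjuncts(6)[unfolded ax6_def], of "[d, r, p, s', q', u, i, j, q, z, s, x]"]
  by (simp add: fU_def)

text \<open>Axiom (6) lets the program argument grow from any suffix j back to the whole code.\<close>
lemma derive_code_suffix:
  "code_suffix j k \<Longrightarrow> [axB] \<turnstile> fU_cfg c j i u \<Longrightarrow> [axB] \<turnstile> fU_cfg c k i u"
proof (induction rule: code_suffix.induct)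
  case (refl j)
  then show ?case .
next
  case (cons j k q' s' p r d)
  obtain x s z q where c: "c = (x, s, z, q)" by (cases c)
  have "[axB] \<turnstile> fU_cfg (x, s, z, q) k i u" using cons c by simp
  then show ?case unfolding c by (rule derive_skip)
qed

lemma derive_run: "(step i)\<^sup>*\<^sup>* c (u, s', z', GZ) \<Longrightarrow> [axB] \<turnstile> fU_cfg c i i u"
proof (induction rule: converse_rtranclp_induct)
  case base
  then show ?case by (rule derive_halt)
next
  case (step c c1)
  from step.hyps(1) show ?case
  proof cases
    case (left q s p r x v z)
    obtain j where suffix: "code_suffix (GDot q (GDot s (GDot p (GDot r (GDot GZ j))))) i"
      using quints_code_suffix[OF left(3)] by blast
    have "[axB] \<turnstile> fU_cfg (x, v, GDot r z, p) i i u"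
      using step.IH left(2) by simp
    then have "[axB] \<turnstile> fU_cfg (GDot x v, s, z, q) (GDot q (GDot s (GDot p (GDot r (GDot GZ j))))) i u"
      by (rule derive_left)
    then have "[axB] \<turnstile> fU_cfg (GDot x v, s, z, q) i i u"
      by (rule derive_code_suffix[OF suffix])
    then show ?thesis using left(1) by simp
  next
    case (right q s p r x v z)
    obtain j where suffix: "code_suffix (GDot q (GDot s (GDot p (GDot r (GDot GO j))))) i"
      using quints_code_suffix[OF right(3)] by blast
    have "[axB] \<turnstile> fU_cfg (GDot x r, v, z, p) i i u"
      using step.IH right(2) by simp
    then have "[axB] \<turnstile> fU_cfg (x, s, GDot v z, q) (GDot q (GDot s (GDot p (GDot r (GDot GO j))))) i u"
      by (rule derive_right)
    then have "[axB] \<turnstile> fU_cfg (x, s, GDot v z, q) i i u"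
      by (rule derive_code_suffix[OF suffix])
    then show ?thesis using right(1) by simp
  qed
qed

lemma halts_provable:
  assumes "halts i a u"
  shows "[axB] \<turnstile> Ex (fT (tm_of i) (tm_of a) (Var 0))"
proof -
  obtain s z where "(step i)\<^sup>*\<^sup>* (GE, GE, GDot a GE, GO) (u, s, z, GZ)"
    using assms unfolding halts_def by blast
  then have "[axB] \<turnstile> fT (tm_of i) (tm_of a) (tm_of u)"
    by (intro derive_T derive_run)
  then have "[axB] \<turnstile> substf (fT (tm_of i) (tm_of a) (Var 0)) (tm_of u) 0"
    by (simp add: fT_def)
  then show ?thesis by (rule ExI)
qed

theorem corollary3:
  fixes enc :: "pform \<Rightarrow> gt" and i a :: gt
  assumes "i \<in> UU enc" and "a \<in> L"
  shows "(\<exists>u. halts i a u) \<longleftrightarrow> [axB] \<turnstile> Ex (fT (tm_of i) (tm_of a) (Var 0))"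
  using halts_provable provable_halts by blast

end
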